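(* Let $X$ be an Alexandroff space and $Y$ a topological space. Let $\alpha$ be the cardinality of the set of connected components of $X$ (equivalently of $X/\Re_X$) and $\beta$ the cardinality of the set of closed points of $Y$. Then $$\mathrm{card}\{f\in Y^X : f \text{ has closed graph}\}=\beta^\alpha\le \mathrm{card}(\mathcal{C}(X,Y)),$$ where $\beta^\alpha$ denotes cardinal exponentiation.
   Context: For a map $f:X\to Y$ its graph is $G_f=\{(x,f(x)):x\in X\}$; $f$ has closed graph if $G_f$ is closed in $X\times Y$ (product topology). A point $y\in Y$ is closed if $\{y\}$ is a closed set. $Y^X$ is the set of all maps $X\to Y$ and $\mathcal{C}(X,Y)$ is the set of continuous maps $X\to Y$. A topological space $X$ is an Alexandroff space if the intersection of every nonempty family of open subsets of $X$ is open; equivalently, every point $a\in X$ has a smallest open neighbourhood, denoted $V_a$. On an Alexandroff space $X$, $\Re_X$ is the equivalence relation: $(x,y)\in\Re_X$ iff there exist $x=x_1,\ldots,x_n=y$ in $X$ with $V_{x_i}\cap V_{x_{i+1}}\neq\emptyset$ for all $i$. *)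

theory Defs
  imports "HOL-Analysis.Analysis"
begin

definition alexandroff_space :: "'a topology \<Rightarrow> bool" where
  "alexandroff_space X \<longleftrightarrow>
     (\<forall>\<F>. \<F> \<noteq> {} \<and> (\<forall>U\<in>\<F>. openin X U) \<longrightarrow> openin X (\<Inter>\<F>))"

definition graph_of :: "'a topology \<Rightarrow> ('a \<Rightarrow> 'b) \<Rightarrow> ('a \<times> 'b) set" where
  "graph_of X f = {(x, f x) | x. x \<in> topspace X}"

definition has_closed_graph :: "'a topology \<Rightarrow> 'b topology \<Rightarrow> ('a \<Rightarrow> 'b) \<Rightarrow> bool" where
  "has_closed_graph X Y f \<longleftrightarrow> closedin (prod_topology X Y) (graph_of X f)"

definition closed_points :: "'b topology \<Rightarrow> 'b set" where
  "closed_points Y = {y \<in> topspace Y. closedin Y {y}}"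

end

theory Submission
  imports Defs
begin

text \<open>
  In an Alexandroff space arbitrary unions of closed sets are closed. A map with closed graph
  has closed fibres (and closed points as values) in any space; in an Alexandroff space the
  fibres, being closed and partitioning the space, are therefore also open. So a closed-graph
  map is continuous and constant on connected components. Conversely, components are open,
  so a map constant on components with closed-point values has the open complement
  \<open>\<Union>\<^sub>x C\<^sub>x \<times> (Y - {f x})\<close> of its graph. Closed-graph maps thus correspond bijectively to
  maps from the set of components to the closed points of \<open>Y\<close>.
\<close>

lemma alexandroff_closedin_Union:
  assumes "alexandroff_space X" and closed: "\<And>C. C \<in> \<C> \<Longrightarrow> closedin X C"
  shows "closedin X (\<Union>\<C>)"
proof (cases "\<C> = {}")
  case False
  have "openin X (\<Inter>C\<in>\<C>. topspace X - C)"
    using assms(1)[unfolded alexandroff_space_def, rule_format, of "(\<lambda>C. topspace X - C) ` \<C>"]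
      closed False by (auto simp: closedin_def)
  moreover have "topspace X - \<Union>\<C> = (\<Inter>C\<in>\<C>. topspace X - C)"
    using False by auto
  moreover have "\<Union>\<C> \<subseteq> topspace X"
    using closed closedin_subset by blast
  ultimately show ?thesis
    by (simp add: closedin_def)
qed simp

lemma alexandroff_openin_connected_components_of:
  assumes "alexandroff_space X" and C: "C \<in> connected_components_of X"
  shows "openin X C"
proof -
  have "C = topspace X - \<Union>(connected_components_of X - {C})"
    using C connected_components_of_disjoint[OF C] Union_connected_components_of[of X]
    by (fastforce simp: disjnt_def)
  moreover have "closedin X (\<Union>(connected_components_of X - {C}))"
    using assms(1) closedin_connected_components_of by (blast intro: alexandroff_closedin_Union)
  ultimately show ?thesis
    by (simp add: closedin_def)
qed

lemma alexandroff_openin_fibre: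
  assumes "alexandroff_space X" and closed: "\<And>z. closedin X {x \<in> topspace X. f x = z}"
  shows "openin X {x \<in> topspace X. f x = y}"
proof -
  have "{x \<in> topspace X. f x = y} = topspace X - (\<Union>z\<in>-{y}. {x \<in> topspace X. f x = z})"
    by blast
  moreover have "closedin X (\<Union>z\<in>-{y}. {x \<in> topspace X. f x = z})"
    using assms(1) by (rule alexandroff_closedin_Union) (auto intro: closed)
  ultimately show ?thesis
    by (simp add: closedin_def)
qed

lemma continuous_map_if_openin_fibres:
  assumes "f \<in> topspace X \<rightarrow> topspace Y" and "\<And>y. openin X {x \<in> topspace X. f x = y}"
  shows "continuous_map X Y f"
proof -
  have "{x \<in> topspace X. f x \<in> U} = (\<Union>y\<in>U. {x \<in> topspace X. f x = y})" for U
    by auto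
  then show ?thesis
    using assms by (auto simp: continuous_map_def)
qed

definition constant_on_components :: "'a topology \<Rightarrow> ('a \<Rightarrow> 'b) \<Rightarrow> bool" where
  "constant_on_components X f \<longleftrightarrow> (\<forall>x x'. connected_component_of X x x' \<longrightarrow> f x' = f x)"

lemma constant_on_components_if_openin_fibres:
  assumes "\<And>y. openin X {x \<in> topspace X. f x = y}"
  shows "constant_on_components X f"
  unfolding constant_on_components_def
proof (intro allI impI)
  fix x x' assume xx': "connected_component_of X x x'"
  have "continuous_map X (discrete_topology (f ` topspace X)) f"
    by (rule continuous_map_if_openin_fibres) (use assms in auto)
  then have "connectedin (discrete_topology (f ` topspace X)) (f ` connected_component_of_set X x)"
    by (rule connectedin_continuous_map_image) (rule connectedin_connected_component_of)
  then obtain a where "f ` connected_component_of_set X x \<subseteq> {a}"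
    by (auto simp: connectedin_discrete_topology)
  moreover have "connected_component_of X x x"
    using xx' connected_component_of_equiv connected_component_of_refl by metis
  ultimately show "f x' = f x"
    using xx' by auto
qed

lemma closed_graph_imp_closedin_fibre:
  assumes f: "f \<in> topspace X \<rightarrow> topspace Y" and "has_closed_graph X Y f"
  shows "closedin X {x \<in> topspace X. f x = y}"
proof (cases "y \<in> topspace Y")
  case True
  have "continuous_map X (prod_topology X Y) (\<lambda>x. (x, y))"
    using True by (intro continuous_map_pairedI continuous_map_id continuous_map_const[THEN iffD2]) auto
  then have "closedin X {x \<in> topspace X. (x, y) \<in> graph_of X f}"
    using assms(2) closedin_continuous_map_preimage unfolding has_closed_graph_def by blast
  moreover have "{x \<in> topspace X. (x, y) \<in> graph_of X f} = {x \<in> topspace X. f x = y}"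
    by (auto simp: graph_of_def)
  ultimately show ?thesis
    by simp
next
  case False
  then have "{x \<in> topspace X. f x = y} = {}"
    using f by blast
  then show ?thesis
    by (metis closedin_empty)
qed

lemma closed_graph_imp_closedin_value:
  assumes x: "x \<in> topspace X" and "has_closed_graph X Y f"
  shows "closedin Y {f x}"
proof -
  have "continuous_map Y (prod_topology X Y) (\<lambda>y. (x, y))"
    using x by (intro continuous_map_pairedI continuous_map_id continuous_map_const[THEN iffD2]) auto
  then have "closedin Y {y \<in> topspace Y. (x, y) \<in> graph_of X f}"
    using assms(2) closedin_continuous_map_preimage unfolding has_closed_graph_def by blast
  moreover have "{y \<in> topspace Y. (x, y) \<in> graph_of X f} = {f x}"
    using closedin_subset[OF assms(2)[unfolded has_closed_graph_def]] x
    by (auto simp: graph_of_def)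
  ultimately show ?thesis
    by simp
qed

lemma alexandroff_closed_graph_if_constant_on_components:
  assumes "alexandroff_space X" and f: "f \<in> topspace X \<rightarrow> topspace Y"
    and closed: "\<And>x. x \<in> topspace X \<Longrightarrow> closedin Y {f x}" and "constant_on_components X f"
  shows "has_closed_graph X Y f"
proof -
  have const: "\<And>x x'. connected_component_of X x x' \<Longrightarrow> f x' = f x"
    using assms(4) unfolding constant_on_components_def by blast
  have box_open: "openin (prod_topology X Y) (connected_component_of_set X x \<times> (topspace Y - {f x}))"
    if x: "x \<in> topspace X" for x
  proof -
    have "openin X (connected_component_of_set X x)"
      using assms(1) connected_component_in_connected_components_of[THEN iffD2, OF x]
      by (rule alexandroff_openin_connected_components_of)
    moreover have "openin Y (topspace Y - {f x})"
      using closed[OF x] by (simp add: closedin_def)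
    ultimately show ?thesis
      by (simp add: openin_prod_Times_iff)
  qed
  have "topspace X \<times> topspace Y - graph_of X f =
          (\<Union>x\<in>topspace X. connected_component_of_set X x \<times> (topspace Y - {f x}))"
  proof (intro equalityI subsetI)
    fix p assume "p \<in> topspace X \<times> topspace Y - graph_of X f"
    then show "p \<in> (\<Union>x\<in>topspace X. connected_component_of_set X x \<times> (topspace Y - {f x}))"
      using connected_component_of_refl by (fastforce simp: graph_of_def)
  next
    fix p assume "p \<in> (\<Union>x\<in>topspace X. connected_component_of_set X x \<times> (topspace Y - {f x}))"
    then show "p \<in> topspace X \<times> topspace Y - graph_of X f"
      using const connected_component_of_equiv by (fastforce simp: graph_of_def)
  qed
  moreover have "openin (prod_topology X Y)
                   (\<Union>x\<in>topspace X. connected_component_of_set X x \<times> (topspace Y - {f x}))"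
    using box_open by blast
  moreover have "graph_of X f \<subseteq> topspace X \<times> topspace Y"
    using f by (auto simp: graph_of_def)
  ultimately show ?thesis
    by (simp add: has_closed_graph_def closedin_def)
qed

lemma alexandroff_closed_graph_iff:
  assumes "alexandroff_space X" and f: "f \<in> topspace X \<rightarrow> topspace Y"
  shows "has_closed_graph X Y f \<longleftrightarrow>
           (\<forall>x\<in>topspace X. closedin Y {f x}) \<and> constant_on_components X f"
proof
  assume cg: "has_closed_graph X Y f"
  have fibres_open: "openin X {x \<in> topspace X. f x = y}" for y
    using assms(1) closed_graph_imp_closedin_fibre[OF f cg] by (rule alexandroff_openin_fibre)
  show "(\<forall>x\<in>topspace X. closedin Y {f x}) \<and> constant_on_components X f"
    using closed_graph_imp_closedin_value[OF _ cg] constant_on_components_if_openin_fibres[OF fibres_open]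
    by blast
next
  assume "(\<forall>x\<in>topspace X. closedin Y {f x}) \<and> constant_on_components X f"
  then show "has_closed_graph X Y f"
    using alexandroff_closed_graph_if_constant_on_components[OF assms] by blast
qed

lemma alexandroff_continuous_map_if_closed_graph:
  assumes "alexandroff_space X" and f: "f \<in> topspace X \<rightarrow> topspace Y" and "has_closed_graph X Y f"
  shows "continuous_map X Y f"
  using f alexandroff_openin_fibre[OF assms(1) closed_graph_imp_closedin_fibre[OF f assms(3)]]
  by (rule continuous_map_if_openin_fibres)

lemma alexandroff_closed_graph_maps_eq:
  assumes "alexandroff_space X"
  shows "{f \<in> topspace X \<rightarrow>\<^sub>E topspace Y. has_closed_graph X Y f} =
           {f \<in> topspace X \<rightarrow>\<^sub>E closed_points Y. constant_on_components X f}"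
proof -
  have "f \<in> topspace X \<rightarrow>\<^sub>E topspace Y \<and> has_closed_graph X Y f \<longleftrightarrow>
          f \<in> topspace X \<rightarrow>\<^sub>E closed_points Y \<and> constant_on_components X f"
    for f :: "'a \<Rightarrow> 'b"
  proof (cases "f \<in> topspace X \<rightarrow>\<^sub>E topspace Y")
    case True
    then have "f \<in> topspace X \<rightarrow> topspace Y"
      by (simp add: PiE_iff)
    then have "has_closed_graph X Y f \<longleftrightarrow>
                 (\<forall>x\<in>topspace X. closedin Y {f x}) \<and> constant_on_components X f"
      by (rule alexandroff_closed_graph_iff[OF assms])
    with True show ?thesis
      by (auto simp: closed_points_def PiE_iff)
  next
    case False
    then show ?thesis
      by (auto simp: closed_points_def PiE_iff)
  qed
  then show ?thesis
    by blast
qed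

definition lift_from_components :: "'a topology \<Rightarrow> ('a set \<Rightarrow> 'b) \<Rightarrow> 'a \<Rightarrow> 'b" where
  "lift_from_components X g = restrict (g \<circ> connected_component_of_set X) (topspace X)"

definition descend_to_components :: "'a topology \<Rightarrow> ('a \<Rightarrow> 'b) \<Rightarrow> 'a set \<Rightarrow> 'b" where
  "descend_to_components X f = restrict (\<lambda>C. f (SOME x. x \<in> C)) (connected_components_of X)"

lemma connected_components_of_some:
  assumes "C \<in> connected_components_of X"
  shows "(SOME x. x \<in> C) \<in> topspace X \<and> connected_component_of_set X (SOME x. x \<in> C) = C"
proof -
  obtain x where x: "x \<in> topspace X" and C: "C = connected_component_of_set X x"
    using assms unfolding connected_components_of_def by blast
  then have "(SOME x. x \<in> C) \<in> C"
    using connected_component_of_refl by (metis mem_Collect_eq someI)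
  then show ?thesis
    using C connected_component_of_equiv by (metis mem_Collect_eq)
qed

lemma lift_from_components_in_PiE:
  assumes "g \<in> Func (connected_components_of X) S"
  shows "lift_from_components X g \<in> topspace X \<rightarrow>\<^sub>E S"
proof -
  have "g (connected_component_of_set X x) \<in> S" if "x \<in> topspace X" for x
    using Func_elim[OF assms connected_component_in_connected_components_of[THEN iffD2, OF that]]
    by blast
  then show ?thesis
    by (simp add: lift_from_components_def restrict_PiE_iff)
qed

lemma constant_on_components_lift_from_components:
  "constant_on_components X (lift_from_components X g)"
  unfolding constant_on_components_def lift_from_components_def
  by (auto dest: connected_component_of_equiv[THEN iffD1])

lemma descend_to_components_in_Func:
  assumes "f \<in> topspace X \<rightarrow>\<^sub>E S"
  shows "descend_to_components X f \<in> Func (connected_components_of X) S"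
  using assms connected_components_of_some by (fastforce simp: Func_def descend_to_components_def)

lemma descend_lift_from_components:
  assumes "g \<in> Func (connected_components_of X) S"
  shows "descend_to_components X (lift_from_components X g) = g"
proof
  fix C show "descend_to_components X (lift_from_components X g) C = g C"
    using assms connected_components_of_some[of C X]
    by (cases "C \<in> connected_components_of X")
      (simp_all add: descend_to_components_def lift_from_components_def Func_def)
qed

lemma lift_descend_to_components:
  assumes "f \<in> topspace X \<rightarrow>\<^sub>E S" and "constant_on_components X f"
  shows "lift_from_components X (descend_to_components X f) = f"
proof
  fix x show "lift_from_components X (descend_to_components X f) x = f x"
  proof (cases "x \<in> topspace X")
    case True
    let ?y = "SOME y. y \<in> connected_component_of_set X x"
    have x_comp: "connected_component_of_set X x \<in> connected_components_of X"
      using True by (rule connected_component_in_connected_components_of[THEN iffD2])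
    then have "connected_component_of_set X ?y = connected_component_of_set X x"
      using connected_components_of_some by blast
    then have "connected_component_of X x ?y"
      using connected_components_of_some[OF x_comp] connected_component_of_refl by (metis mem_Collect_eq)
    then have "f ?y = f x"
      using assms(2) unfolding constant_on_components_def by blast
    then show ?thesis
      using True x_comp by (simp add: lift_from_components_def descend_to_components_def)
  next
    case False
    then show ?thesis
      using assms(1) by (simp add: lift_from_components_def PiE_def extensional_def)
  qed
qed

lemma bij_betw_lift_from_components:
  "bij_betw (lift_from_components X) (Func (connected_components_of X) S)
     {f \<in> topspace X \<rightarrow>\<^sub>E S. constant_on_components X f}"
  by (rule bij_betwI[where g = "descend_to_components X"])
    (auto simp: lift_from_components_in_PiE constant_on_components_lift_from_components
      descend_to_components_in_Func descend_lift_from_components lift_descend_to_components)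

theorem corollary3p6:
  fixes X :: "'a topology" and Y :: "'b topology"
  assumes "alexandroff_space X"
  shows "(card_of {f \<in> topspace X \<rightarrow>\<^sub>E topspace Y. has_closed_graph X Y f},
          BNF_Cardinal_Arithmetic.cexp (card_of (closed_points Y)) (card_of (connected_components_of X))) \<in> ordIso
       \<and> (BNF_Cardinal_Arithmetic.cexp (card_of (closed_points Y)) (card_of (connected_components_of X)),
          card_of {f \<in> topspace X \<rightarrow>\<^sub>E topspace Y. continuous_map X Y f}) \<in> ordLeq"
proof -
  let ?F = "Func (connected_components_of X) (closed_points Y)"
  let ?CG = "{f \<in> topspace X \<rightarrow>\<^sub>E topspace Y. has_closed_graph X Y f}"
  let ?CM = "{f \<in> topspace X \<rightarrow>\<^sub>E topspace Y. continuous_map X Y f}"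
  have cexp: "BNF_Cardinal_Arithmetic.cexp (card_of (closed_points Y)) (card_of (connected_components_of X))
                = card_of ?F"
    by (simp add: cexp_def Field_card_of)
  have iso: "(card_of ?F, card_of ?CG) \<in> ordIso"
    unfolding alexandroff_closed_graph_maps_eq[OF assms] card_of_ordIso[symmetric]
    using bij_betw_lift_from_components by blast
  have "?CG \<subseteq> ?CM"
    using alexandroff_continuous_map_if_closed_graph[OF assms] by (auto simp: PiE_def)
  then have "(card_of ?CG, card_of ?CM) \<in> ordLeq"
    by (rule card_of_mono1)
  then show ?thesis
    unfolding cexp using ordIso_symmetric[OF iso] ordIso_ordLeq_trans[OF iso] by blast
qed

end
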